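(* Let $(K_n;n\ge1)$ be non-negative integral kernels on $\mathsf{X}$, $(\nu_n;n\ge1)$ nonzero finite measures, and $(S_n^-,S_n^+;n\ge1)$ positive bounded measurable functions such that \[ S_n^-(x)\nu_n(\cdot)\le K_n(x,\cdot)\le S_n^+(x)\nu_n(\cdot),\qquad\forall x\in\mathsf{X},\ n\ge1. \] Let $\overline{S}_n:=\sup_{x,x'}\frac{S_n^+(x)}{S_n^-(x')}$, $C_S:=\sup_{n\ge1}\overline{S}_n$ and $\rho_n:=1-\left(\inf_x\frac{S_n^-(x)}{S_n^+(x)}\right)^2$. Then \[ \sup_{n\ge1}\sup_{x,x'\in\mathsf{X}}\frac{K_{0,n}(1)(x)}{K_{0,n}(1)(x')}\le C_S, \] and for every probability measure $\eta$, every bounded measurable $\varphi$ and every $n\ge1$, \[ \sup_{x\in\mathsf{X}}\left|\frac{K_{0,n}(\varphi)(x)}{\eta K_{0,n}(1)}-\frac{K_{0,n}(1)(x)}{\eta K_{0,n}(1)}\frac{\eta K_{0,n}(\varphi)}{\eta K_{0,n}(1)}\right|\le 2\|\varphi\|\,C_S\prod_{p=1}^n\rho_p. \]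
   Context: $(\mathsf{X},\mathcal{B})$ is a measurable space. For a measure $\mu$, kernel $K$ and function $\varphi$: $\mu(\varphi)=\int\varphi\,d\mu$, $K(\varphi)(x)=\int K(x,dy)\varphi(y)$, $\mu K(\cdot)=\int\mu(dx)K(x,\cdot)$; $1$ is the constant function one; $\|\varphi\|=\sup_x|\varphi(x)|$. For kernels $K_n$, $K_{0,n}:=K_1K_2\cdots K_n$ (composition). *)

theory Defs
  imports "HOL-Probability.Probability"
begin

definition kapp :: "('a \<Rightarrow> 'a measure) \<Rightarrow> ('a \<Rightarrow> real) \<Rightarrow> 'a \<Rightarrow> real" where
  "kapp k \<phi> x = (\<integral>y. \<phi> y \<partial>(k x))"

text \<open>Composite kernel K_{0,n} = K_1 K_2 ... K_n acting on functions:
  K_{0,0}(phi) = phi,  K_{0,n+1}(phi) = K_{0,n}(K_{n+1}(phi)).\<close>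
primrec kcomp :: "(nat \<Rightarrow> 'a \<Rightarrow> 'a measure) \<Rightarrow> nat \<Rightarrow> ('a \<Rightarrow> real) \<Rightarrow> 'a \<Rightarrow> real" where
  "kcomp K 0 \<phi> = \<phi>"
| "kcomp K (Suc n) \<phi> = kcomp K n (kapp (K (Suc n)) \<phi>)"

definition supnorm :: "'a measure \<Rightarrow> ('a \<Rightarrow> real) \<Rightarrow> real" where
  "supnorm M \<phi> = (SUP x\<in>space M. \<bar>\<phi> x\<bar>)"

end

theory Submission
  imports Defs
begin

(*
  For a single such kernel k put eps = inf_x S^-(x)/S^+(x).  The key estimate
  (lemma oscillation_contraction) is Birkhoff-type: if h > 0 and the ratio g/h has
  oscillation at most D, then k g / k h has oscillation at most (1 - eps) D.  Indeed,
  with m = inf g/h one splits g = m h + q1 and D h = q1 + q2 with q1, q2 >= 0, and the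
  two-sided bounds give k q / k h >= eps nu(q)/nu(h) for q = q1, q2.

  Writing K_{0,n} = K_1 K_{1,n} and inducting on n with the shifted kernel sequence,
  the ratio K_{0,n}(phi)/K_{0,n}(1) has oscillation at most 2 ||phi|| prod (1 - eps_p),
  which is bounded by 2 ||phi|| prod rho_p; peeling off K_1 alone gives
  K_{0,n}(1)(x)/K_{0,n}(1)(x') <= S^+_1(x)/S^-_1(x') <= C_S.  Finally, for a probability
  measure eta the centred normalised quantity of the theorem equals
  (K_{0,n}(1)(x)/Z) * (eta-average of K_{0,n}(1)(y) (r(x) - r(y))) / Z with
  r = K_{0,n}(phi)/K_{0,n}(1), which is bounded by C_S times the oscillation of r.
*)

section \<open>Bounded measurable functions\<close>

definition bounded_measurable :: "'a measure \<Rightarrow> ('a \<Rightarrow> real) \<Rightarrow> bool" where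
  "bounded_measurable M f \<longleftrightarrow> f \<in> borel_measurable M \<and> (\<exists>B. \<forall>x\<in>space M. \<bar>f x\<bar> \<le> B)"

lemma bounded_measurable_const: "bounded_measurable M (\<lambda>_. c)"
  by (auto simp: bounded_measurable_def)

lemma bounded_measurableE:
  assumes "bounded_measurable M f"
  obtains B where "B \<ge> 0" "\<And>x. x \<in> space M \<Longrightarrow> \<bar>f x\<bar> \<le> B"
proof -
  obtain B where "\<forall>x\<in>space M. \<bar>f x\<bar> \<le> B" using assms by (auto simp: bounded_measurable_def)
  then show ?thesis using that[of "max B 0"] by force
qed

lemma bounded_measurable_diff:
  assumes "bounded_measurable M f" "bounded_measurable M g"
  shows "bounded_measurable M (\<lambda>y. f y - g y)"
proof -
  obtain B where B: "\<And>x. x \<in> space M \<Longrightarrow> \<bar>f x\<bar> \<le> B" using assms(1) by (meson bounded_measurableE)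
  obtain C where C: "\<And>x. x \<in> space M \<Longrightarrow> \<bar>g x\<bar> \<le> C" using assms(2) by (meson bounded_measurableE)
  have "\<forall>x\<in>space M. \<bar>f x - g x\<bar> \<le> B + C" using B C by (smt (verit))
  then show ?thesis using assms by (auto simp: bounded_measurable_def)
qed

lemma bounded_measurable_mult:
  assumes "bounded_measurable M f" "bounded_measurable M g"
  shows "bounded_measurable M (\<lambda>y. f y * g y)"
proof -
  obtain B where B: "B \<ge> 0" "\<And>x. x \<in> space M \<Longrightarrow> \<bar>f x\<bar> \<le> B" using assms(1) by (meson bounded_measurableE)
  obtain C where C: "\<And>x. x \<in> space M \<Longrightarrow> \<bar>g x\<bar> \<le> C" using assms(2) by (meson bounded_measurableE)
  have "\<forall>x\<in>space M. \<bar>f x * g x\<bar> \<le> B * C" using B C by (auto simp: abs_mult intro!: mult_mono)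
  then show ?thesis using assms by (auto simp: bounded_measurable_def)
qed

lemma borel_measurable_sets_cong:
  "sets N = sets M \<Longrightarrow> f \<in> borel_measurable M \<Longrightarrow> f \<in> borel_measurable N"
  using measurable_cong_sets[of N M borel borel] by simp

lemma integrable_bounded_measurable:
  assumes N: "finite_measure N" "sets N = sets M" and f: "bounded_measurable M f"
  shows "integrable N f"
proof -
  obtain B where B: "\<And>x. x \<in> space M \<Longrightarrow> \<bar>f x\<bar> \<le> B" using f by (meson bounded_measurableE)
  have "space N = space M" using N(2) sets_eq_imp_space_eq by blast
  then have "AE x in N. norm (f x) \<le> B" using B by (auto intro: AE_I2)
  moreover have "f \<in> borel_measurable N"
    using f N(2) by (auto simp: bounded_measurable_def intro: borel_measurable_sets_cong)
  ultimately show ?thesis by (rule finite_measure.integrable_const_bound[OF N(1)])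
qed

lemma integral_pos_bounded_measurable:
  assumes N: "finite_measure N" "sets N = sets M" "emeasure N (space M) \<noteq> 0"
    and h: "bounded_measurable M h" and pos: "\<And>x. x \<in> space M \<Longrightarrow> h x > 0"
  shows "(\<integral>y. h y \<partial>N) > 0"
proof -
  have sp: "space N = space M" using N(2) sets_eq_imp_space_eq by blast
  have int: "integrable N h" by (rule integrable_bounded_measurable[OF N(1,2) h])
  have pos_ae: "AE y in N. 0 < h y" using pos sp by (auto intro: AE_I2)
  then have nonneg: "AE y in N. 0 \<le> h y" by eventually_elim simp
  have "(\<integral>y. h y \<partial>N) \<noteq> 0"
  proof
    assume "(\<integral>y. h y \<partial>N) = 0"
    then have "AE x in N. h x = 0" using integral_nonneg_eq_0_iff_AE[OF int nonneg] by simp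
    then have "AE x in N. False" using pos_ae by eventually_elim simp
    then have "emeasure N (space N) = 0" using ae_filter_eq_bot_iff trivial_limit_def by metis
    then show False using N(3) sp by simp
  qed
  then show ?thesis using integral_nonneg_AE[OF nonneg] by simp
qed

lemma oscillation_band:
  fixes r :: "'a \<Rightarrow> real"
  assumes osc: "\<And>u v. u \<in> S \<Longrightarrow> v \<in> S \<Longrightarrow> r u - r v \<le> D" and x: "x \<in> S"
  obtains m where "\<And>u. u \<in> S \<Longrightarrow> m \<le> r u" "\<And>u. u \<in> S \<Longrightarrow> r u \<le> m + D"
proof
  have bdd: "bdd_below (r ` S)" by (rule bdd_belowI[of _ "r x - D"]) (auto dest: osc[OF x])
  show "(INF u\<in>S. r u) \<le> r u" if "u \<in> S" for u by (rule cINF_lower[OF bdd that])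
  show "r u \<le> (INF u\<in>S. r u) + D" if u: "u \<in> S" for u
  proof -
    have "r u - D \<le> (INF u\<in>S. r u)" by (rule cINF_greatest) (use x in \<open>auto dest: osc[OF u]\<close>)
    then show ?thesis by simp
  qed
qed

section \<open>A single dominated kernel\<close>

definition min_ratio :: "'a measure \<Rightarrow> ('a \<Rightarrow> real) \<Rightarrow> ('a \<Rightarrow> real) \<Rightarrow> real" where
  "min_ratio M s_lo s_hi = (INF x\<in>space M. s_lo x / s_hi x)"

locale dominated_kernel =
  fixes M :: "'a measure" and k :: "'a \<Rightarrow> 'a measure" and \<nu> :: "'a measure"
    and s_lo s_hi :: "'a \<Rightarrow> real"
  assumes sets_k: "\<And>x. x \<in> space M \<Longrightarrow> sets (k x) = sets M"
    and emeasure_k_measurable: "\<And>A. A \<in> sets M \<Longrightarrow> (\<lambda>x. emeasure (k x) A) \<in> borel_measurable M"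
    and finite_nu: "finite_measure \<nu>"
    and sets_nu: "sets \<nu> = sets M"
    and nu_nonzero: "emeasure \<nu> (space M) \<noteq> 0"
    and s_lo_pos: "\<And>x. x \<in> space M \<Longrightarrow> s_lo x > 0"
    and s_hi_pos: "\<And>x. x \<in> space M \<Longrightarrow> s_hi x > 0"
    and s_hi_bounded: "\<exists>B. \<forall>x\<in>space M. s_hi x \<le> B"
    and lower: "\<And>x A. x \<in> space M \<Longrightarrow> A \<in> sets M \<Longrightarrow> ennreal (s_lo x) * emeasure \<nu> A \<le> emeasure (k x) A"
    and upper: "\<And>x A. x \<in> space M \<Longrightarrow> A \<in> sets M \<Longrightarrow> emeasure (k x) A \<le> ennreal (s_hi x) * emeasure \<nu> A"
begin

lemma space_k: "x \<in> space M \<Longrightarrow> space (k x) = space M"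
  using sets_k sets_eq_imp_space_eq by blast

lemma space_nu: "space \<nu> = space M"
  using sets_nu sets_eq_imp_space_eq by blast

lemma finite_k: assumes x: "x \<in> space M" shows "finite_measure (k x)"
proof (rule finite_measureI)
  have "emeasure (k x) (space M) \<le> ennreal (s_hi x) * emeasure \<nu> (space M)"
    using upper[OF x] by simp
  also have "\<dots> < \<infinity>"
    using finite_measure.emeasure_finite[OF finite_nu, of "space M"]
    by (simp add: ennreal_mult_less_top less_top)
  finally show "emeasure (k x) (space (k x)) \<noteq> \<infinity>" using space_k[OF x] by simp
qed

lemma integrable_k: "x \<in> space M \<Longrightarrow> bounded_measurable M f \<Longrightarrow> integrable (k x) f"
  by (rule integrable_bounded_measurable[OF finite_k sets_k])

lemma integrable_nu: "bounded_measurable M f \<Longrightarrow> integrable \<nu> f"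
  by (rule integrable_bounded_measurable[OF finite_nu sets_nu])

lemma integral_nu_pos:
  "bounded_measurable M h \<Longrightarrow> (\<And>x. x \<in> space M \<Longrightarrow> h x > 0) \<Longrightarrow> (\<integral>y. h y \<partial>\<nu>) > 0"
  by (rule integral_pos_bounded_measurable[OF finite_nu sets_nu nu_nonzero])

text \<open>The set-wise bounds lift to nonnegative integrals, since they say
  density \<nu> s_lo(x) \<le> k x \<le> density \<nu> s_hi(x) as measures.\<close>
lemma nn_integral_bounds:
  assumes x: "x \<in> space M" and f: "f \<in> borel_measurable M"
  shows "ennreal (s_lo x) * (\<integral>\<^sup>+y. f y \<partial>\<nu>) \<le> (\<integral>\<^sup>+y. f y \<partial>k x)"
    and "(\<integral>\<^sup>+y. f y \<partial>k x) \<le> ennreal (s_hi x) * (\<integral>\<^sup>+y. f y \<partial>\<nu>)"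
proof -
  have f_nu: "f \<in> borel_measurable \<nu>" by (rule borel_measurable_sets_cong[OF sets_nu f])
  have "density \<nu> (\<lambda>_. ennreal (s_lo x)) \<le> k x"
    by (subst le_measure) (auto simp: sets_nu sets_k[OF x] emeasure_density_const intro!: lower[OF x])
  then have "(\<integral>\<^sup>+y. f y \<partial>density \<nu> (\<lambda>_. ennreal (s_lo x))) \<le> (\<integral>\<^sup>+y. f y \<partial>k x)"
    by (intro nn_integral_mono_measure) (auto simp: sets_nu sets_k[OF x])
  then show "ennreal (s_lo x) * (\<integral>\<^sup>+y. f y \<partial>\<nu>) \<le> (\<integral>\<^sup>+y. f y \<partial>k x)"
    by (simp add: nn_integral_density f_nu nn_integral_cmult)
  have "k x \<le> density \<nu> (\<lambda>_. ennreal (s_hi x))"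
    by (subst le_measure) (auto simp: sets_nu sets_k[OF x] emeasure_density_const intro!: upper[OF x])
  then have "(\<integral>\<^sup>+y. f y \<partial>k x) \<le> (\<integral>\<^sup>+y. f y \<partial>density \<nu> (\<lambda>_. ennreal (s_hi x)))"
    by (intro nn_integral_mono_measure) (auto simp: sets_nu sets_k[OF x])
  then show "(\<integral>\<^sup>+y. f y \<partial>k x) \<le> ennreal (s_hi x) * (\<integral>\<^sup>+y. f y \<partial>\<nu>)"
    by (simp add: nn_integral_density f_nu nn_integral_cmult)
qed

lemma kapp_bounds:
  assumes x: "x \<in> space M" and f: "bounded_measurable M f" and nonneg: "\<And>y. y \<in> space M \<Longrightarrow> f y \<ge> 0"
  shows "s_lo x * (\<integral>y. f y \<partial>\<nu>) \<le> kapp k f x"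
    and "kapp k f x \<le> s_hi x * (\<integral>y. f y \<partial>\<nu>)"
proof -
  have [measurable]: "f \<in> borel_measurable M" using f by (simp add: bounded_measurable_def)
  have ae_nu: "AE y in \<nu>. 0 \<le> f y" using nonneg space_nu by (auto intro: AE_I2)
  have ae_k: "AE y in k x. 0 \<le> f y" using nonneg space_k[OF x] by (auto intro: AE_I2)
  have nu_eq: "(\<integral>\<^sup>+y. ennreal (f y) \<partial>\<nu>) = ennreal (\<integral>y. f y \<partial>\<nu>)"
    by (rule nn_integral_eq_integral[OF integrable_nu[OF f] ae_nu])
  have k_eq: "(\<integral>\<^sup>+y. ennreal (f y) \<partial>k x) = ennreal (kapp k f x)"
    unfolding kapp_def by (rule nn_integral_eq_integral[OF integrable_k[OF x f] ae_k])
  have int_nu: "(\<integral>y. f y \<partial>\<nu>) \<ge> 0" by (rule integral_nonneg_AE[OF ae_nu])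
  have int_k: "kapp k f x \<ge> 0" unfolding kapp_def by (rule integral_nonneg_AE[OF ae_k])
  have s: "s_lo x > 0" "s_hi x > 0" using s_lo_pos s_hi_pos x by auto
  have "(\<lambda>y. ennreal (f y)) \<in> borel_measurable M" by measurable
  note bounds = nn_integral_bounds[OF x this, unfolded nu_eq k_eq]
  have lo: "ennreal (s_lo x) * ennreal (\<integral>y. f y \<partial>\<nu>) = ennreal (s_lo x * (\<integral>y. f y \<partial>\<nu>))"
    and hi: "ennreal (s_hi x) * ennreal (\<integral>y. f y \<partial>\<nu>) = ennreal (s_hi x * (\<integral>y. f y \<partial>\<nu>))"
    using s int_nu by (auto simp: ennreal_mult)
  show "s_lo x * (\<integral>y. f y \<partial>\<nu>) \<le> kapp k f x"
    using bounds(1) unfolding lo ennreal_le_iff[OF int_k] .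
  show "kapp k f x \<le> s_hi x * (\<integral>y. f y \<partial>\<nu>)"
    using bounds(2) s int_nu unfolding hi by (simp add: ennreal_le_iff)
qed

lemma nn_integral_k_measurable:
  assumes f: "f \<in> borel_measurable M"
  shows "(\<lambda>x. \<integral>\<^sup>+y. f y \<partial>k x) \<in> borel_measurable M"
  using f
proof (induction rule: borel_measurable_induct)
  case (cong f g)
  have "(\<integral>\<^sup>+y. f y \<partial>k x) = (\<integral>\<^sup>+y. g y \<partial>k x)" if "x \<in> space M" for x
    by (rule nn_integral_cong) (simp add: space_k[OF that] cong.hyps(3))
  then show ?case by (rule measurable_cong[THEN iffD2, OF _ cong.IH])
next
  case (set A)
  have "(\<integral>\<^sup>+y. indicator A y \<partial>k x) = emeasure (k x) A" if "x \<in> space M" for x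
    by (rule nn_integral_indicator) (simp add: sets_k[OF that] set)
  then show ?case by (rule measurable_cong[THEN iffD2, OF _ emeasure_k_measurable[OF set]])
next
  case (mult u c)
  have "(\<integral>\<^sup>+y. c * u y \<partial>k x) = c * (\<integral>\<^sup>+y. u y \<partial>k x)" if "x \<in> space M" for x
    by (rule nn_integral_cmult) (rule borel_measurable_sets_cong[OF sets_k[OF that] mult.hyps(2)])
  moreover have "(\<lambda>x. c * (\<integral>\<^sup>+y. u y \<partial>k x)) \<in> borel_measurable M"
    using mult.IH by measurable
  ultimately show ?case by (rule measurable_cong[THEN iffD2])
next
  case (add u v)
  have "(\<integral>\<^sup>+y. v y + u y \<partial>k x) = (\<integral>\<^sup>+y. v y \<partial>k x) + (\<integral>\<^sup>+y. u y \<partial>k x)" if "x \<in> space M" for x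
    by (rule nn_integral_add) (rule borel_measurable_sets_cong[OF sets_k[OF that]], fact)+
  moreover have "(\<lambda>x. (\<integral>\<^sup>+y. v y \<partial>k x) + (\<integral>\<^sup>+y. u y \<partial>k x)) \<in> borel_measurable M"
    by (rule borel_measurable_add[OF add.IH(2) add.IH(1)])
  ultimately show ?case by (rule measurable_cong[THEN iffD2])
next
  case (seq U)
  have "(\<integral>\<^sup>+y. (\<Squnion> range U) y \<partial>k x) = (SUP i. \<integral>\<^sup>+y. U i y \<partial>k x)" if "x \<in> space M" for x
    unfolding SUP_apply
    by (rule nn_integral_monotone_convergence_SUP[OF seq.hyps(3)])
       (rule borel_measurable_sets_cong[OF sets_k[OF that] seq.hyps(1)])
  moreover have "(\<lambda>x. SUP i. \<integral>\<^sup>+y. U i y \<partial>k x) \<in> borel_measurable M"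
    by (rule borel_measurable_SUP) (auto intro: seq.IH)
  ultimately show ?case by (rule measurable_cong[THEN iffD2])
qed

lemma kapp_bounded_measurable:
  assumes f: "bounded_measurable M f"
  shows "bounded_measurable M (kapp k f)"
proof -
  have [measurable]: "f \<in> borel_measurable M" using f by (simp add: bounded_measurable_def)
  obtain B where B: "B \<ge> 0" "\<And>x. x \<in> space M \<Longrightarrow> \<bar>f x\<bar> \<le> B" using f by (meson bounded_measurableE)
  obtain C where C: "\<forall>x\<in>space M. s_hi x \<le> C" using s_hi_bounded by blast
  have pos: "(\<lambda>x. \<integral>\<^sup>+y. ennreal (f y) \<partial>k x) \<in> borel_measurable M"
    by (rule nn_integral_k_measurable) measurable
  have neg: "(\<lambda>x. \<integral>\<^sup>+y. ennreal (- f y) \<partial>k x) \<in> borel_measurable M"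
    by (rule nn_integral_k_measurable) measurable
  have "kapp k f x = enn2real (\<integral>\<^sup>+y. ennreal (f y) \<partial>k x) - enn2real (\<integral>\<^sup>+y. ennreal (- f y) \<partial>k x)"
    if "x \<in> space M" for x
    using that by (simp add: kapp_def real_lebesgue_integral_def integrable_k[OF _ f])
  then have meas: "kapp k f \<in> borel_measurable M"
    by (rule measurable_cong[THEN iffD2]) (auto intro!: borel_measurable_diff borel_measurable_enn2real pos neg)
  have "\<bar>kapp k f x\<bar> \<le> C * (\<integral>y. B \<partial>\<nu>)" if x: "x \<in> space M" for x
  proof -
    have "\<bar>kapp k f x\<bar> \<le> (\<integral>y. \<bar>f y\<bar> \<partial>k x)" unfolding kapp_def by (rule integral_abs_bound)
    also have "\<dots> \<le> kapp k (\<lambda>_. B) x" unfolding kapp_def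
      using integrable_k[OF x f] integrable_k[OF x bounded_measurable_const] B space_k[OF x]
      by (intro integral_mono) auto
    also have "\<dots> \<le> s_hi x * (\<integral>y. B \<partial>\<nu>)"
      by (rule kapp_bounds(2)[OF x bounded_measurable_const]) (use B in auto)
    also have "\<dots> \<le> C * (\<integral>y. B \<partial>\<nu>)"
      by (rule mult_right_mono) (use C x B in auto)
    finally show ?thesis .
  qed
  then show ?thesis using meas by (auto simp: bounded_measurable_def)
qed

lemma kapp_pos:
  assumes x: "x \<in> space M" and h: "bounded_measurable M h" and pos: "\<And>y. y \<in> space M \<Longrightarrow> h y > 0"
  shows "kapp k h x > 0"
proof -
  have "s_lo x * (\<integral>y. h y \<partial>\<nu>) \<le> kapp k h x"
    by (rule kapp_bounds(1)[OF x h]) (use pos in \<open>auto intro: less_imp_le\<close>)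
  moreover have "s_lo x * (\<integral>y. h y \<partial>\<nu>) > 0" using integral_nu_pos[OF h pos] s_lo_pos[OF x] by simp
  ultimately show ?thesis by linarith
qed

text \<open>The contraction coefficient lies in [0,1] (compare the bounds on the constant 1).\<close>
lemma min_ratio_bounds:
  assumes x: "x \<in> space M"
  shows "0 \<le> min_ratio M s_lo s_hi" "min_ratio M s_lo s_hi \<le> s_lo x / s_hi x" "min_ratio M s_lo s_hi \<le> 1"
proof -
  have bdd: "bdd_below ((\<lambda>x. s_lo x / s_hi x) ` space M)"
    by (rule bdd_belowI[of _ 0]) (use s_lo_pos s_hi_pos in \<open>auto intro: less_imp_le\<close>)
  show le: "min_ratio M s_lo s_hi \<le> s_lo x / s_hi x"
    unfolding min_ratio_def by (rule cINF_lower[OF bdd x])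
  show "0 \<le> min_ratio M s_lo s_hi" unfolding min_ratio_def
    by (rule cINF_greatest) (use x s_lo_pos s_hi_pos in \<open>auto intro: less_imp_le\<close>)
  have one: "(\<integral>y. (1::real) \<partial>\<nu>) > 0" by (rule integral_nu_pos[OF bounded_measurable_const]) simp
  have "s_lo x * (\<integral>y. (1::real) \<partial>\<nu>) \<le> s_hi x * (\<integral>y. 1 \<partial>\<nu>)"
    using kapp_bounds[OF x bounded_measurable_const, of 1] by simp
  then have "s_lo x / s_hi x \<le> 1" using one s_hi_pos[OF x] by simp
  then show "min_ratio M s_lo s_hi \<le> 1" using le by linarith
qed

lemma kapp_ratio_lower:
  assumes x: "x \<in> space M" and q: "bounded_measurable M q" and q_nonneg: "\<And>y. y \<in> space M \<Longrightarrow> q y \<ge> 0"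
    and h: "bounded_measurable M h" and h_pos: "\<And>y. y \<in> space M \<Longrightarrow> h y > 0"
  shows "min_ratio M s_lo s_hi * ((\<integral>y. q y \<partial>\<nu>) / (\<integral>y. h y \<partial>\<nu>)) \<le> kapp k q x / kapp k h x"
proof -
  define Q where "Q = (\<integral>y. q y \<partial>\<nu>)"
  define H where "H = (\<integral>y. h y \<partial>\<nu>)"
  have H: "H > 0" unfolding H_def by (rule integral_nu_pos[OF h h_pos])
  have Q: "Q \<ge> 0" unfolding Q_def by (rule integral_nonneg_AE) (use q_nonneg space_nu in auto)
  have q_lo: "s_lo x * Q \<le> kapp k q x" unfolding Q_def by (rule kapp_bounds(1)[OF x q q_nonneg])
  have h_hi: "kapp k h x \<le> s_hi x * H" unfolding H_def
    by (rule kapp_bounds(2)[OF x h]) (use h_pos in \<open>auto intro: less_imp_le\<close>)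
  have s: "s_lo x > 0" "s_hi x > 0" using s_lo_pos s_hi_pos x by auto
  have "min_ratio M s_lo s_hi * (Q / H) \<le> (s_lo x / s_hi x) * (Q / H)"
    by (rule mult_right_mono) (use min_ratio_bounds[OF x] Q H in auto)
  also have "\<dots> = (s_lo x * Q) / (s_hi x * H)" by simp
  also have "\<dots> \<le> kapp k q x / kapp k h x"
  proof (rule frac_le)
    show "0 \<le> kapp k q x" using q_lo mult_nonneg_nonneg[of "s_lo x" Q] s Q by linarith
  qed (use q_lo h_hi s H kapp_pos[OF x h h_pos] in auto)
  finally show ?thesis unfolding Q_def H_def .
qed

lemma oscillation_contraction:
  assumes g: "bounded_measurable M g" and h: "bounded_measurable M h"
    and h_pos: "\<And>y. y \<in> space M \<Longrightarrow> h y > 0"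
    and osc: "\<And>u v. u \<in> space M \<Longrightarrow> v \<in> space M \<Longrightarrow> g u / h u - g v / h v \<le> D"
    and x: "x \<in> space M" and y: "y \<in> space M"
  shows "kapp k g x / kapp k h x - kapp k g y / kapp k h y \<le> (1 - min_ratio M s_lo s_hi) * D"
proof -
  obtain m where m_le: "\<And>u. u \<in> space M \<Longrightarrow> m \<le> g u / h u"
    and le_m: "\<And>u. u \<in> space M \<Longrightarrow> g u / h u \<le> m + D"
    using oscillation_band[of "space M" "\<lambda>u. g u / h u", OF osc x] by blast
  define q1 where "q1 u = g u - m * h u" for u
  define q2 where "q2 u = D * h u - q1 u" for u
  have q1: "bounded_measurable M q1" unfolding q1_def
    by (rule bounded_measurable_diff[OF g bounded_measurable_mult[OF bounded_measurable_const h]])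
  have q2: "bounded_measurable M q2" unfolding q2_def
    by (rule bounded_measurable_diff[OF bounded_measurable_mult[OF bounded_measurable_const h] q1])
  have q1_nonneg: "q1 u \<ge> 0" if "u \<in> space M" for u
    using m_le[OF that] h_pos[OF that] by (simp add: q1_def field_simps)
  have q2_nonneg: "q2 u \<ge> 0" if "u \<in> space M" for u
    using le_m[OF that] h_pos[OF that] by (simp add: q1_def q2_def field_simps)
  have kq1: "kapp k q1 z = kapp k g z - m * kapp k h z" if "z \<in> space M" for z
    unfolding q1_def kapp_def using integrable_k[OF that g] integrable_k[OF that h] by simp
  have kq2: "kapp k q2 z = D * kapp k h z - kapp k q1 z" if "z \<in> space M" for z
    unfolding q2_def kapp_def using integrable_k[OF that h] integrable_k[OF that q1] by simp
  define H where "H = (\<integral>u. h u \<partial>\<nu>)"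
  define Q1 where "Q1 = (\<integral>u. q1 u \<partial>\<nu>)"
  have H: "H > 0" unfolding H_def by (rule integral_nu_pos[OF h h_pos])
  have Q2: "(\<integral>u. q2 u \<partial>\<nu>) = D * H - Q1" unfolding H_def Q1_def q2_def
    using integrable_nu[OF h] integrable_nu[OF q1] by simp
  define \<epsilon> where "\<epsilon> = min_ratio M s_lo s_hi"
  have hx: "kapp k h x > 0" and hy: "kapp k h y > 0" using kapp_pos[OF _ h h_pos] x y by auto
  have lx: "\<epsilon> * ((D * H - Q1) / H) \<le> kapp k q2 x / kapp k h x"
    using kapp_ratio_lower[OF x q2 q2_nonneg h h_pos] unfolding Q2 H_def[symmetric] \<epsilon>_def[symmetric] .
  have ly: "\<epsilon> * (Q1 / H) \<le> kapp k q1 y / kapp k h y"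
    unfolding \<epsilon>_def Q1_def H_def by (rule kapp_ratio_lower[OF y q1 q1_nonneg h h_pos])
  have ex: "kapp k g x / kapp k h x = m + D - kapp k q2 x / kapp k h x"
    unfolding kq2[OF x] kq1[OF x] using hx by (simp add: field_simps)
  have ey: "kapp k g y / kapp k h y = m + kapp k q1 y / kapp k h y"
    unfolding kq1[OF y] using hy by (simp add: field_simps)
  have "\<epsilon> * ((D * H - Q1) / H) + \<epsilon> * (Q1 / H) = \<epsilon> * D" using H by (simp add: field_simps)
  then show ?thesis unfolding ex ey \<epsilon>_def[symmetric] using lx ly by (simp add: algebra_simps)
qed

end

section \<open>Composite kernels\<close>

definition dominated_kernels ::
    "'a measure \<Rightarrow> (nat \<Rightarrow> 'a \<Rightarrow> 'a measure) \<Rightarrow> (nat \<Rightarrow> 'a measure) \<Rightarrow> (nat \<Rightarrow> 'a \<Rightarrow> real) \<Rightarrow> (nat \<Rightarrow> 'a \<Rightarrow> real) \<Rightarrow> bool"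
  where "dominated_kernels M K \<nu> Sm Sp \<longleftrightarrow> (\<forall>n\<ge>1. dominated_kernel M (K n) (\<nu> n) (Sm n) (Sp n))"

lemma dominated_kernels_first:
  "dominated_kernels M K \<nu> Sm Sp \<Longrightarrow> dominated_kernel M (K 1) (\<nu> 1) (Sm 1) (Sp 1)"
  by (simp add: dominated_kernels_def)

lemma dominated_kernels_shift:
  "dominated_kernels M K \<nu> Sm Sp \<Longrightarrow>
     dominated_kernels M (\<lambda>m. K (Suc m)) (\<lambda>m. \<nu> (Suc m)) (\<lambda>m. Sm (Suc m)) (\<lambda>m. Sp (Suc m))"
  by (simp add: dominated_kernels_def)

lemma kcomp_Suc_left: "kcomp K (Suc n) \<phi> = kapp (K 1) (kcomp (\<lambda>m. K (Suc m)) n \<phi>)"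
  by (induction n arbitrary: \<phi>) auto

lemma kcomp_bounded_measurable:
  "dominated_kernels M K \<nu> Sm Sp \<Longrightarrow> bounded_measurable M \<phi> \<Longrightarrow> bounded_measurable M (kcomp K n \<phi>)"
proof (induction n arbitrary: K \<nu> Sm Sp)
  case (Suc n)
  show ?case unfolding kcomp_Suc_left
    by (rule dominated_kernel.kapp_bounded_measurable[OF dominated_kernels_first[OF Suc.prems(1)]])
       (rule Suc.IH[OF dominated_kernels_shift[OF Suc.prems(1)] Suc.prems(2)])
qed simp

lemma kcomp_one_pos:
  "dominated_kernels M K \<nu> Sm Sp \<Longrightarrow> x \<in> space M \<Longrightarrow> kcomp K n (\<lambda>_. 1) x > 0"
proof (induction n arbitrary: K \<nu> Sm Sp x)
  case (Suc n)
  note shifted = dominated_kernels_shift[OF Suc.prems(1)]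
  show ?case unfolding kcomp_Suc_left
    by (rule dominated_kernel.kapp_pos[OF dominated_kernels_first[OF Suc.prems(1)] Suc.prems(2)
          kcomp_bounded_measurable[OF shifted bounded_measurable_const]])
       (rule Suc.IH[OF shifted])
qed simp

lemma kcomp_one_ratio:
  assumes K: "dominated_kernels M K \<nu> Sm Sp" and x: "x \<in> space M" and x': "x' \<in> space M"
  shows "kcomp K (Suc n) (\<lambda>_. 1) x / kcomp K (Suc n) (\<lambda>_. 1) x' \<le> Sp 1 x / Sm 1 x'"
proof -
  interpret dominated_kernel M "K 1" "\<nu> 1" "Sm 1" "Sp 1" by (rule dominated_kernels_first[OF K])
  note shifted = dominated_kernels_shift[OF K]
  define h where "h = kcomp (\<lambda>m. K (Suc m)) n (\<lambda>_. 1)"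
  have h: "bounded_measurable M h" unfolding h_def
    by (rule kcomp_bounded_measurable[OF shifted bounded_measurable_const])
  have h_pos: "\<And>y. y \<in> space M \<Longrightarrow> h y > 0" unfolding h_def by (rule kcomp_one_pos[OF shifted])
  define H where "H = (\<integral>u. h u \<partial>\<nu> 1)"
  have H: "H > 0" unfolding H_def by (rule integral_nu_pos[OF h h_pos])
  have hi: "kapp (K 1) h x \<le> Sp 1 x * H" unfolding H_def
    by (rule kapp_bounds(2)[OF x h]) (use h_pos in \<open>auto intro: less_imp_le\<close>)
  have lo: "Sm 1 x' * H \<le> kapp (K 1) h x'" unfolding H_def
    by (rule kapp_bounds(1)[OF x' h]) (use h_pos in \<open>auto intro: less_imp_le\<close>)
  have "kapp (K 1) h x / kapp (K 1) h x' \<le> (Sp 1 x * H) / (Sm 1 x' * H)"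
    by (rule frac_le) (use hi lo H s_lo_pos[OF x'] s_hi_pos[OF x] kapp_pos[OF x h h_pos] in auto)
  also have "\<dots> = Sp 1 x / Sm 1 x'" using H by simp
  finally show ?thesis unfolding kcomp_Suc_left h_def .
qed

text \<open>Iterating the contraction: the ratio K_{0,n}(\<phi>) / K_{0,n}(1) oscillates by at most
  2 B prod_p (1 - \<epsilon>_p^2); the factor 1 - \<epsilon>^2 of the theorem is weaker than 1 - \<epsilon>.\<close>
lemma kcomp_oscillation:
  assumes "dominated_kernels M K \<nu> Sm Sp" "bounded_measurable M \<phi>" "\<And>x. x \<in> space M \<Longrightarrow> \<bar>\<phi> x\<bar> \<le> B"
    "x \<in> space M" "y \<in> space M"
  shows "kcomp K n \<phi> x / kcomp K n (\<lambda>_. 1) x - kcomp K n \<phi> y / kcomp K n (\<lambda>_. 1) y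
     \<le> 2 * B * (\<Prod>p<n. 1 - (min_ratio M (Sm (Suc p)) (Sp (Suc p)))\<^sup>2)"
  using assms
proof (induction n arbitrary: K \<nu> Sm Sp x y)
  case 0
  then show ?case using 0(3)[of x] 0(3)[of y] by (simp, arith)
next
  case (Suc n)
  interpret dominated_kernel M "K 1" "\<nu> 1" "Sm 1" "Sp 1" by (rule dominated_kernels_first[OF Suc.prems(1)])
  note shifted = dominated_kernels_shift[OF Suc.prems(1)]
  define \<epsilon> where "\<epsilon> = min_ratio M (Sm 1) (Sp 1)"
  define h where "h = kcomp (\<lambda>m. K (Suc m)) n (\<lambda>_. 1)"
  define g where "g = kcomp (\<lambda>m. K (Suc m)) n \<phi>"
  define D where "D = 2 * B * (\<Prod>p<n. 1 - (min_ratio M (Sm (Suc (Suc p))) (Sp (Suc (Suc p))))\<^sup>2)"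
  have h: "bounded_measurable M h" unfolding h_def
    by (rule kcomp_bounded_measurable[OF shifted bounded_measurable_const])
  have g: "bounded_measurable M g" unfolding g_def by (rule kcomp_bounded_measurable[OF shifted Suc.prems(2)])
  have h_pos: "\<And>y. y \<in> space M \<Longrightarrow> h y > 0" unfolding h_def by (rule kcomp_one_pos[OF shifted])
  have osc: "\<And>u v. u \<in> space M \<Longrightarrow> v \<in> space M \<Longrightarrow> g u / h u - g v / h v \<le> D"
    unfolding g_def h_def D_def by (rule Suc.IH[OF shifted Suc.prems(2,3)])
  have D: "D \<ge> 0" using osc[OF Suc.prems(4) Suc.prems(4)] by simp
  have \<epsilon>: "0 \<le> \<epsilon>" "\<epsilon> \<le> 1" unfolding \<epsilon>_def using min_ratio_bounds[OF Suc.prems(4)] by auto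
  have "kapp (K 1) g x / kapp (K 1) h x - kapp (K 1) g y / kapp (K 1) h y \<le> (1 - \<epsilon>) * D"
    unfolding \<epsilon>_def by (rule oscillation_contraction[OF g h h_pos osc Suc.prems(4,5)])
  also have "\<dots> \<le> (1 - \<epsilon>\<^sup>2) * D"
    by (rule mult_right_mono) (use \<epsilon> D in \<open>auto simp: power2_eq_square intro: mult_left_le_one_le\<close>)
  also have "\<dots> = 2 * B * (\<Prod>p<Suc n. 1 - (min_ratio M (Sm (Suc p)) (Sp (Suc p)))\<^sup>2)"
    unfolding D_def \<epsilon>_def prod.lessThan_Suc_shift by simp
  finally show ?case unfolding kcomp_Suc_left g_def h_def .
qed

section \<open>Normalisation by a probability measure\<close>

lemma normalised_centred_bound:
  assumes \<eta>: "prob_space \<eta>" "sets \<eta> = sets M"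
    and f: "bounded_measurable M f" and g: "bounded_measurable M g"
    and g_pos: "\<And>y. y \<in> space M \<Longrightarrow> g y > 0"
    and osc: "\<And>u v. u \<in> space M \<Longrightarrow> v \<in> space M \<Longrightarrow> f u / g u - f v / g v \<le> D"
    and x: "x \<in> space M"
  defines "Z \<equiv> \<integral>y. g y \<partial>\<eta>" and "E \<equiv> \<integral>y. f y \<partial>\<eta>"
  shows "\<bar>f x / Z - (g x / Z) * (E / Z)\<bar> \<le> (g x / Z) * D"
proof -
  have fin: "finite_measure \<eta>" using \<eta>(1) by (rule prob_space.axioms(1))
  have sp: "space \<eta> = space M" using \<eta>(2) sets_eq_imp_space_eq by blast
  have int_g: "integrable \<eta> g" and int_f: "integrable \<eta> f"
    using integrable_bounded_measurable[OF fin \<eta>(2)] f g by auto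
  have Z: "Z > 0" unfolding Z_def
    by (rule integral_pos_bounded_measurable[OF fin \<eta>(2) _ g g_pos])
       (use prob_space.emeasure_space_1[OF \<eta>(1)] sp in simp)
  define r where "r u = f u / g u" for u
  have r_osc: "\<bar>r x - r y\<bar> \<le> D" if "y \<in> space M" for y
    using osc[OF x that] osc[OF that x] unfolding r_def by arith
  have eq: "r x * Z - E = (\<integral>y. g y * (r x - r y) \<partial>\<eta>)"
  proof -
    have "r x * Z - E = (\<integral>y. r x * g y - f y \<partial>\<eta>)" unfolding Z_def E_def using int_g int_f by simp
    also have "\<dots> = (\<integral>y. g y * (r x - r y) \<partial>\<eta>)"
    proof (rule Bochner_Integration.integral_cong)
      show "r x * g y - f y = g y * (r x - r y)" if "y \<in> space \<eta>" for y
        using g_pos[of y] that sp by (simp add: r_def field_simps)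
    qed simp
    finally show ?thesis .
  qed
  have "\<bar>r x * Z - E\<bar> \<le> (\<integral>y. \<bar>g y * (r x - r y)\<bar> \<partial>\<eta>)" unfolding eq by (rule integral_abs_bound)
  also have "\<dots> \<le> (\<integral>y. D * g y \<partial>\<eta>)"
  proof (rule integral_mono)
    have "bounded_measurable M (\<lambda>y. r x - r y)"
      using f g r_osc by (auto simp: bounded_measurable_def r_def)
    then show "integrable \<eta> (\<lambda>y. \<bar>g y * (r x - r y)\<bar>)"
      by (intro integrable_abs integrable_bounded_measurable[OF fin \<eta>(2)] bounded_measurable_mult[OF g])
    show "integrable \<eta> (\<lambda>y. D * g y)" using int_g by simp
    show "\<bar>g y * (r x - r y)\<bar> \<le> D * g y" if "y \<in> space \<eta>" for y
      using r_osc[of y] g_pos[of y] that sp by (simp add: abs_mult mult.commute mult_left_mono)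
  qed
  also have "\<dots> = D * Z" unfolding Z_def by simp
  finally have dev: "\<bar>(r x * Z - E) / Z\<bar> \<le> D" using Z by (simp add: abs_divide divide_le_eq mult.commute)
  have eq: "f x / Z - (g x / Z) * (E / Z) = (g x / Z) * ((r x * Z - E) / Z)"
    unfolding r_def using g_pos[OF x] Z by (simp add: field_simps)
  have mass: "g x / Z > 0" using g_pos[OF x] Z by simp
  show ?thesis unfolding eq abs_mult abs_of_pos[OF mass]
    by (rule mult_left_mono[OF dev]) (use mass in simp)
qed

lemma normalised_mass_bound:
  assumes \<eta>: "prob_space \<eta>" "sets \<eta> = sets M"
    and g: "bounded_measurable M g" and g_pos: "\<And>y. y \<in> space M \<Longrightarrow> g y > 0"
    and x: "x \<in> space M" and ratio: "\<And>y. y \<in> space M \<Longrightarrow> ereal (g x / g y) \<le> C"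
  shows "ereal (g x / (\<integral>y. g y \<partial>\<eta>)) \<le> C"
proof (cases C)
  case (real c)
  have fin: "finite_measure \<eta>" using \<eta>(1) by (rule prob_space.axioms(1))
  have sp: "space \<eta> = space M" using \<eta>(2) sets_eq_imp_space_eq by blast
  have int_g: "integrable \<eta> g" by (rule integrable_bounded_measurable[OF fin \<eta>(2) g])
  have Z: "(\<integral>y. g y \<partial>\<eta>) > 0"
    by (rule integral_pos_bounded_measurable[OF fin \<eta>(2) _ g g_pos])
       (use prob_space.emeasure_space_1[OF \<eta>(1)] sp in simp)
  have le: "g x \<le> c * g y" if "y \<in> space M" for y
    using ratio[OF that] g_pos[OF that] real by (simp add: divide_le_eq)
  have "g x = (\<integral>y. g x \<partial>\<eta>)" using prob_space.prob_space[OF \<eta>(1)] by simp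
  also have "\<dots> \<le> (\<integral>y. c * g y \<partial>\<eta>)"
    by (rule integral_mono) (use int_g le sp finite_measure.integrable_const[OF fin] in auto)
  also have "\<dots> = c * (\<integral>y. g y \<partial>\<eta>)" by simp
  finally show ?thesis using Z real by (simp add: divide_le_eq mult.commute)
next
  case MInf
  then show ?thesis using ratio[OF x] by simp
qed simp

lemma abs_le_supnorm:
  "\<exists>B. \<forall>x\<in>space M. \<bar>\<phi> x\<bar> \<le> B \<Longrightarrow> x \<in> space M \<Longrightarrow> \<bar>\<phi> x\<bar> \<le> supnorm M \<phi>"
  unfolding supnorm_def by (rule cSUP_upper) (auto intro: bdd_aboveI)

lemma kcomp_mass_ratio_le_sup:
  assumes K: "dominated_kernels M K \<nu> Sm Sp" and n: "n \<ge> 1"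
    and x: "x \<in> space M" and x': "x' \<in> space M"
  shows "ereal (kcomp K n (\<lambda>_. 1) x / kcomp K n (\<lambda>_. 1) x')
           \<le> (SUP n\<in>{1..}. SUP x\<in>space M. SUP x'\<in>space M. ereal (Sp n x / Sm n x'))"
proof -
  obtain m where m: "n = Suc m" using n by (cases n) auto
  have "ereal (kcomp K n (\<lambda>_. 1) x / kcomp K n (\<lambda>_. 1) x') \<le> ereal (Sp 1 x / Sm 1 x')"
    unfolding m using kcomp_one_ratio[OF K x x'] by simp
  also have "\<dots> \<le> (SUP n\<in>{1..}. SUP x\<in>space M. SUP x'\<in>space M. ereal (Sp n x / Sm n x'))"
    by (intro SUP_upper2[of 1] SUP_upper2[OF x] SUP_upper2[OF x']) auto
  finally show ?thesis .
qed

lemma kcomp_normalised_deviation: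
  assumes K: "dominated_kernels M K \<nu> Sm Sp" and \<eta>: "prob_space \<eta>" "sets \<eta> = sets M"
    and \<phi>: "\<phi> \<in> borel_measurable M" "\<exists>B. \<forall>x\<in>space M. \<bar>\<phi> x\<bar> \<le> B"
    and x: "x \<in> space M" and ratio: "\<And>y. y \<in> space M \<Longrightarrow> ereal (kcomp K n (\<lambda>_. 1) x / kcomp K n (\<lambda>_. 1) y) \<le> C"
  defines "Z \<equiv> \<integral>y. kcomp K n (\<lambda>_. 1) y \<partial>\<eta>" and "E \<equiv> \<integral>y. kcomp K n \<phi> y \<partial>\<eta>"
  shows "ereal \<bar>kcomp K n \<phi> x / Z - (kcomp K n (\<lambda>_. 1) x / Z) * (E / Z)\<bar>
           \<le> C * ereal (2 * supnorm M \<phi> * (\<Prod>p<n. 1 - (min_ratio M (Sm (Suc p)) (Sp (Suc p)))\<^sup>2))"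
    (is "_ \<le> C * ereal ?D")
proof -
  have \<phi>_bm: "bounded_measurable M \<phi>" using \<phi> by (simp add: bounded_measurable_def)
  have g: "bounded_measurable M (kcomp K n (\<lambda>_. 1))" and f: "bounded_measurable M (kcomp K n \<phi>)"
    using kcomp_bounded_measurable[OF K] \<phi>_bm bounded_measurable_const by auto
  have osc: "kcomp K n \<phi> u / kcomp K n (\<lambda>_. 1) u - kcomp K n \<phi> v / kcomp K n (\<lambda>_. 1) v \<le> ?D"
    if "u \<in> space M" "v \<in> space M" for u v
    by (rule kcomp_oscillation[OF K \<phi>_bm abs_le_supnorm[OF \<phi>(2)] that])
  have "ereal \<bar>kcomp K n \<phi> x / Z - (kcomp K n (\<lambda>_. 1) x / Z) * (E / Z)\<bar>
      \<le> ereal (kcomp K n (\<lambda>_. 1) x / Z) * ereal ?D"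
    using normalised_centred_bound[OF \<eta> f g kcomp_one_pos[OF K] osc x] by (simp add: Z_def E_def)
  also have "\<dots> \<le> C * ereal ?D"
    using normalised_mass_bound[OF \<eta> g kcomp_one_pos[OF K] x ratio] osc[OF x x]
    by (intro ereal_mult_right_mono) (auto simp: Z_def)
  finally show ?thesis .
qed

theorem proposition3:
  fixes M :: "'a measure"
    and K :: "nat \<Rightarrow> 'a \<Rightarrow> 'a measure"
    and \<nu> :: "nat \<Rightarrow> 'a measure"
    and Sm Sp :: "nat \<Rightarrow> 'a \<Rightarrow> real"
  assumes K_sets: "\<And>n x. n \<ge> 1 \<Longrightarrow> x \<in> space M \<Longrightarrow> sets (K n x) = sets M"
    and K_meas: "\<And>n A. n \<ge> 1 \<Longrightarrow> A \<in> sets M \<Longrightarrow> (\<lambda>x. emeasure (K n x) A) \<in> borel_measurable M"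
    and nu_fin: "\<And>n. n \<ge> 1 \<Longrightarrow> finite_measure (\<nu> n)"
    and nu_sets: "\<And>n. n \<ge> 1 \<Longrightarrow> sets (\<nu> n) = sets M"
    and nu_nz: "\<And>n. n \<ge> 1 \<Longrightarrow> emeasure (\<nu> n) (space M) \<noteq> 0"
    and Sm_meas: "\<And>n. n \<ge> 1 \<Longrightarrow> Sm n \<in> borel_measurable M"
    and Sp_meas: "\<And>n. n \<ge> 1 \<Longrightarrow> Sp n \<in> borel_measurable M"
    and Sm_pos: "\<And>n x. n \<ge> 1 \<Longrightarrow> x \<in> space M \<Longrightarrow> Sm n x > 0"
    and Sp_pos: "\<And>n x. n \<ge> 1 \<Longrightarrow> x \<in> space M \<Longrightarrow> Sp n x > 0"
    and Sm_bdd: "\<And>n. n \<ge> 1 \<Longrightarrow> \<exists>B. \<forall>x\<in>space M. Sm n x \<le> B"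
    and Sp_bdd: "\<And>n. n \<ge> 1 \<Longrightarrow> \<exists>B. \<forall>x\<in>space M. Sp n x \<le> B"
    and lower: "\<And>n x A. n \<ge> 1 \<Longrightarrow> x \<in> space M \<Longrightarrow> A \<in> sets M \<Longrightarrow>
                  ennreal (Sm n x) * emeasure (\<nu> n) A \<le> emeasure (K n x) A"
    and upper: "\<And>n x A. n \<ge> 1 \<Longrightarrow> x \<in> space M \<Longrightarrow> A \<in> sets M \<Longrightarrow>
                  emeasure (K n x) A \<le> ennreal (Sp n x) * emeasure (\<nu> n) A"
  defines "C_S \<equiv> (SUP n\<in>{1..}. SUP x\<in>space M. SUP x'\<in>space M. ereal (Sp n x / Sm n x'))"
    and "\<rho> \<equiv> (\<lambda>n. 1 - (INF x\<in>space M. Sm n x / Sp n x)\<^sup>2)"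
  shows "(SUP n\<in>{1..}. SUP x\<in>space M. SUP x'\<in>space M.
            ereal (kcomp K n (\<lambda>_. 1) x / kcomp K n (\<lambda>_. 1) x')) \<le> C_S
         \<and> (\<forall>\<eta> \<phi> n. prob_space \<eta> \<longrightarrow> sets \<eta> = sets M \<longrightarrow> \<phi> \<in> borel_measurable M \<longrightarrow>
           (\<exists>B. \<forall>x\<in>space M. \<bar>\<phi> x\<bar> \<le> B) \<longrightarrow> n \<ge> 1 \<longrightarrow>
           (let Z = (\<integral>y. kcomp K n (\<lambda>_. 1) y \<partial>\<eta>);
                E = (\<integral>y. kcomp K n \<phi> y \<partial>\<eta>)
            in (SUP x\<in>space M. ereal \<bar>kcomp K n \<phi> x / Z - (kcomp K n (\<lambda>_. 1) x / Z) * (E / Z)\<bar>))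
           \<le> ereal (2 * supnorm M \<phi>) * C_S * ereal (\<Prod>p=1..n. \<rho> p))"
proof -
  have K: "dominated_kernels M K \<nu> Sm Sp"
    unfolding dominated_kernels_def
    by (intro allI impI dominated_kernel.intro)
       (simp_all add: K_sets K_meas nu_fin nu_sets nu_nz Sm_pos Sp_pos Sp_bdd lower upper)
  have mass_ratio: "ereal (kcomp K n (\<lambda>_. 1) x / kcomp K n (\<lambda>_. 1) x') \<le> C_S"
    if "n \<ge> 1" "x \<in> space M" "x' \<in> space M" for n x x'
    unfolding C_S_def by (rule kcomp_mass_ratio_le_sup[OF K that])
  have rho: "(\<Prod>p<n. 1 - (min_ratio M (Sm (Suc p)) (Sp (Suc p)))\<^sup>2) = (\<Prod>p=1..n. \<rho> p)" for n
    by (simp add: \<rho>_def min_ratio_def prod.atLeast1_atMost_eq)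
  have deviation: "ereal \<bar>kcomp K n \<phi> x / Z - (kcomp K n (\<lambda>_. 1) x / Z) * (E / Z)\<bar>
      \<le> ereal (2 * supnorm M \<phi>) * C_S * ereal (\<Prod>p=1..n. \<rho> p)"
    if "prob_space \<eta>" "sets \<eta> = sets M" "\<phi> \<in> borel_measurable M" "\<exists>B. \<forall>x\<in>space M. \<bar>\<phi> x\<bar> \<le> B"
      "n \<ge> 1" "x \<in> space M" "Z = (\<integral>y. kcomp K n (\<lambda>_. 1) y \<partial>\<eta>)" "E = (\<integral>y. kcomp K n \<phi> y \<partial>\<eta>)"
    for \<eta> \<phi> n x Z E
    using kcomp_normalised_deviation[OF K that(1-4,6) mass_ratio[OF that(5,6)]] that(7,8)
    by (simp add: rho mult.commute mult.left_commute)
  show ?thesis unfolding Let_def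
    by (intro conjI allI impI SUP_least mass_ratio deviation) auto
qed

end
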